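(* Let $Q\in\mathbb{N}$, $\mathcal{S}\subseteq B(0,Q^{1/2})\cap(\mathbb{Z}[i]\setminus\{0\})$, $0<\Delta\le1/2$ and $\tau=\Delta^{-1/4}$. Define $K(\Delta)$ and $P(\alpha)$ as in the context. Then $$K(\Delta)\le 4\sup_{\substack{r\in\mathbb{Z}[i]\\ 1\le|r|\le\tau}}\ \sup_{\substack{b\in\mathbb{Z}[i]\\ (b,r)=1}}\ \sup_{\substack{z\in\mathbb{C}\\ \Delta^{1/2}\le|z|\le\frac{2}{|r|\tau}}} P\Big(\frac{b}{r}+z\Big).$$
   Context: $\mathbb{Z}[i]$ are the Gaussian integers, $\mathcal{N}(q)=\Re(q)^2+\Im(q)^2$, $B(y,u)=\{w\in\mathbb{C}:|w-y|\le u\}$. For each $q$ let $\mathcal{R}_q$ be a complete system of representatives of the residue classes modulo $q$ in $\mathbb{Z}[i]$ coprime to $q$. Define $$K(\Delta)=\sup_{\alpha\in\mathbb{C}}\Big|\Big\{(a,q):\ q\in\mathcal{S},\ a\in\mathcal{R}_q,\ \min_{w\in\mathbb{Z}[i]}\Big|\frac{\overline{a}}{\overline{q}}-\alpha-w\Big|\le\Delta^{1/2}\Big\}\Big|,$$ and for $\alpha\in\mathbb{C}$, $$P(\alpha)=\Big|\Big\{(a,q)\in\mathbb{Z}[i]\times\mathcal{S}:\ (a,q)=1,\ \Big|\frac{a}{q}-\alpha\Big|\le\Delta^{1/2}\Big\}\Big|.$$ *)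

theory Defs
  imports "HOL-Analysis.Analysis"
begin

definition ZI :: "complex set" where
  "ZI = {z. Re z \<in> \<int> \<and> Im z \<in> \<int>}"

definition gdvd :: "complex \<Rightarrow> complex \<Rightarrow> bool" where
  "gdvd d a \<longleftrightarrow> (\<exists>c\<in>ZI. a = d * c)"

definition gcoprime :: "complex \<Rightarrow> complex \<Rightarrow> bool" where
  "gcoprime a b \<longleftrightarrow> (\<forall>d\<in>ZI. gdvd d a \<and> gdvd d b \<longrightarrow> cmod d = 1)"

definition reduced_residue_system :: "complex \<Rightarrow> complex set \<Rightarrow> bool" where
  "reduced_residue_system q R \<longleftrightarrow>
     R \<subseteq> ZI \<and> (\<forall>a\<in>R. gcoprime a q) \<and>
     (\<forall>a\<in>ZI. gcoprime a q \<longrightarrow> (\<exists>!r. r \<in> R \<and> gdvd q (a - r)))"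

definition Kfun :: "complex set \<Rightarrow> (complex \<Rightarrow> complex set) \<Rightarrow> real \<Rightarrow> real" where
  "Kfun S R \<Delta> = (SUP \<alpha>\<in>(UNIV::complex set).
     real (card {(a, q). q \<in> S \<and> a \<in> R q \<and>
        (\<exists>w\<in>ZI. cmod (cnj a / cnj q - \<alpha> - w) \<le> sqrt \<Delta>)}))"

definition Pfun :: "complex set \<Rightarrow> real \<Rightarrow> complex \<Rightarrow> nat" where
  "Pfun S \<Delta> \<alpha> = card {(a, q). a \<in> ZI \<and> q \<in> S \<and> gcoprime a q \<and>
        cmod (a / q - \<alpha>) \<le> sqrt \<Delta>}"

end

theory Submission
  imports Defs
begin

text \<open>
  Subtracting a suitable multiple of q from a maps the pairs counted by K(\<Delta>) at \<alpha>
  injectively to pairs counted by P(conj \<alpha>), so it suffices to bound P(\<beta>)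
  for every \<beta>. A pigeonhole argument in Z[i] (Dirichlet's approximation theorem) gives a
  fraction b/r in lowest terms with 1 \<le> |r| \<le> \<tau> and |\<beta> - b/r| \<le> 2/(|r| \<tau>). If
  |\<beta> - b/r| \<ge> sqrt \<Delta>, then P(\<beta>) is itself a term of the supremum. Otherwise the disc of
  radius sqrt \<Delta> about \<beta> is covered by four discs of the same radius centred at distance
  exactly sqrt \<Delta> from b/r, which costs the factor 4; the choice \<tau> = \<Delta> powr (-1/4) makes
  sqrt \<Delta> \<le> 2/(|r| \<tau>), so these centres are admissible.
\<close>

lemma ZI_iff: "z \<in> ZI \<longleftrightarrow> (\<exists>x y::int. z = Complex (of_int x) (of_int y))"
  unfolding ZI_def by (auto elim!: Ints_cases simp: complex_eq_iff)

lemma Complex_of_int_in_ZI [simp]: "Complex (of_int x) (of_int y) \<in> ZI"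
  by (auto simp: ZI_iff)

lemma ZI_0 [simp]: "0 \<in> ZI" and ZI_1 [simp]: "1 \<in> ZI"
  unfolding ZI_def by auto

lemma ZI_add [intro]: "a \<in> ZI \<Longrightarrow> b \<in> ZI \<Longrightarrow> a + b \<in> ZI"
  and ZI_diff [intro]: "a \<in> ZI \<Longrightarrow> b \<in> ZI \<Longrightarrow> a - b \<in> ZI"
  and ZI_mult [intro]: "a \<in> ZI \<Longrightarrow> b \<in> ZI \<Longrightarrow> a * b \<in> ZI"
  and ZI_cnj [intro]: "a \<in> ZI \<Longrightarrow> cnj a \<in> ZI"
  unfolding ZI_def by auto

lemma norm_ge_1_if_ZI:
  assumes "z \<in> ZI" "z \<noteq> 0"
  shows "1 \<le> cmod z"
proof -
  obtain x y :: int where z: "z = Complex x y"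
    using assms(1) ZI_iff by blast
  have "x \<noteq> 0 \<or> y \<noteq> 0"
    using assms(2) z by (auto simp: Complex_eq_0)
  then have "0 < x\<^sup>2 + y\<^sup>2"
    by (simp add: sum_power2_gt_zero_iff)
  then have "(1::real) \<le> of_int (x\<^sup>2 + y\<^sup>2)"
    by (metis int_one_le_iff_zero_less of_int_1 of_int_le_iff)
  then show ?thesis
    by (simp add: z cmod_def)
qed

lemma finite_ZI_cball: "finite (ZI \<inter> cball c \<rho>)"
proof -
  define N where "N = \<lceil>cmod c + \<rho>\<rceil>"
  have "ZI \<inter> cball c \<rho> \<subseteq> (\<lambda>(x, y). Complex (of_int x) (of_int y)) ` ({-N..N} \<times> {-N..N})"
  proof
    fix z assume z: "z \<in> ZI \<inter> cball c \<rho>"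
    then obtain x y :: int where xy: "z = Complex x y"
      using ZI_iff by blast
    have "cmod z \<le> cmod c + \<rho>"
      using z norm_triangle_sub[of z c] by (auto simp: dist_norm norm_minus_commute)
    also have "\<dots> \<le> N"
      unfolding N_def by (rule le_of_int_ceiling)
    finally have "\<bar>Re z\<bar> \<le> N" "\<bar>Im z\<bar> \<le> N"
      using abs_Re_le_cmod abs_Im_le_cmod order_trans by blast+
    then show "z \<in> (\<lambda>(x, y). Complex (of_int x) (of_int y)) ` ({-N..N} \<times> {-N..N})"
      using xy by (auto simp: abs_le_iff)
  qed
  then show ?thesis
    by (rule finite_subset) auto
qed

lemma card_ZI_cball_le: "card (ZI \<inter> cball c \<rho>) \<le> card (ZI \<inter> cball 0 (2 * \<rho>))"
proof (cases "ZI \<inter> cball c \<rho> = {}")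
  case False
  then obtain a\<^sub>0 where a\<^sub>0: "a\<^sub>0 \<in> ZI \<inter> cball c \<rho>"
    by blast
  have "(\<lambda>a. a - a\<^sub>0) ` (ZI \<inter> cball c \<rho>) \<subseteq> ZI \<inter> cball 0 (2 * \<rho>)"
  proof clarify
    fix a assume "a \<in> ZI" "a \<in> cball c \<rho>"
    moreover have "dist a a\<^sub>0 \<le> dist a c + dist c a\<^sub>0"
      by (rule dist_triangle)
    ultimately show "a - a\<^sub>0 \<in> ZI \<inter> cball 0 (2 * \<rho>)"
      using a\<^sub>0 by (auto simp: dist_commute dist_norm)
  qed
  then show ?thesis
    by (intro card_inj_on_le[OF _ _ finite_ZI_cball]) (auto intro: inj_onI)
qed simp

lemma norm_eq_1_if_gdvd_1:
  assumes "d \<in> ZI" "gdvd d 1"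
  shows "cmod d = 1"
proof -
  obtain c where c: "c \<in> ZI" "1 = d * c"
    using assms(2) unfolding gdvd_def by blast
  then have "d \<noteq> 0" "c \<noteq> 0"
    by auto
  then have "1 \<le> cmod d" "1 \<le> cmod c"
    using assms(1) c(1) norm_ge_1_if_ZI by auto
  moreover have "cmod d * cmod c = 1"
    by (metis c(2) norm_mult norm_one)
  moreover have "cmod d * 1 \<le> cmod d * cmod c"
    using \<open>1 \<le> cmod c\<close> by (intro mult_left_mono) auto
  ultimately show ?thesis
    by linarith
qed

lemma gcoprime_1_left: "gcoprime 1 r"
  using norm_eq_1_if_gdvd_1 unfolding gcoprime_def by blast

lemma gcoprime_diff_mult:
  assumes "gcoprime a q" "c \<in> ZI"
  shows "gcoprime (a - q * c) q"
  unfolding gcoprime_def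
proof (intro ballI impI, elim conjE)
  fix d assume d: "d \<in> ZI" "gdvd d (a - q * c)" "gdvd d q"
  obtain e\<^sub>1 where e\<^sub>1: "e\<^sub>1 \<in> ZI" "a - q * c = d * e\<^sub>1"
    using d(2) unfolding gdvd_def by blast
  obtain e\<^sub>2 where e\<^sub>2: "e\<^sub>2 \<in> ZI" "q = d * e\<^sub>2"
    using d(3) unfolding gdvd_def by blast
  have "a = d * (e\<^sub>1 + e\<^sub>2 * c)"
    using e\<^sub>1 e\<^sub>2 by (simp add: algebra_simps)
  then have "gdvd d a"
    unfolding gdvd_def using e\<^sub>1 e\<^sub>2 assms(2) by blast
  then show "cmod d = 1"
    using assms(1) d unfolding gcoprime_def by blast
qed

lemma abs_diff_lt_if_floor_mult_eq:
  fixes m a b :: real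
  assumes "0 < m" "\<lfloor>m * a\<rfloor> = \<lfloor>m * b\<rfloor>"
  shows "\<bar>a - b\<bar> < 1 / m"
proof -
  have "\<bar>m * a - m * b\<bar> < 1"
    using assms(2) by linarith
  then have "m * \<bar>a - b\<bar> < 1"
    using assms(1) by (simp add: abs_mult flip: right_diff_distrib)
  then show ?thesis
    using assms(1) by (simp add: field_simps)
qed

lemma ZI_pigeonhole:
  fixes P :: "complex set" and m\<^sub>1 m\<^sub>2 :: nat
  assumes "P \<subseteq> ZI" "finite P" "m\<^sub>1 * m\<^sub>2 < card P" "0 < m\<^sub>1" "0 < m\<^sub>2"
  obtains p q b where "p \<in> P" "q \<in> P" "p \<noteq> q" "b \<in> ZI"
    "\<bar>Re ((p - q) * \<beta> - b)\<bar> < 1 / m\<^sub>1" "\<bar>Im ((p - q) * \<beta> - b)\<bar> < 1 / m\<^sub>2"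
proof -
  define cell where "cell p = (\<lfloor>m\<^sub>1 * frac (Re (p * \<beta>))\<rfloor>, \<lfloor>m\<^sub>2 * frac (Im (p * \<beta>))\<rfloor>)" for p
  have "cell ` P \<subseteq> {0..<int m\<^sub>1} \<times> {0..<int m\<^sub>2}"
    using assms(4,5) frac_lt_1 by (auto simp: cell_def frac_ge_0 floor_less_iff)
  moreover have "card ({0..<int m\<^sub>1} \<times> {0..<int m\<^sub>2}) < card P"
    using assms(3) by (simp add: card_cartesian_product)
  ultimately have "\<not> inj_on cell P"
    by (metis card_inj_on_le finite_SigmaI finite_atLeastLessThan_int not_le)
  then obtain p q where pq: "p \<in> P" "q \<in> P" "p \<noteq> q" "cell p = cell q"
    unfolding inj_on_def by blast
  define b where "b = Complex (\<lfloor>Re (p * \<beta>)\<rfloor> - \<lfloor>Re (q * \<beta>)\<rfloor>) (\<lfloor>Im (p * \<beta>)\<rfloor> - \<lfloor>Im (q * \<beta>)\<rfloor>)"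
  have "Re ((p - q) * \<beta> - b) = frac (Re (p * \<beta>)) - frac (Re (q * \<beta>))"
    "Im ((p - q) * \<beta> - b) = frac (Im (p * \<beta>)) - frac (Im (q * \<beta>))"
    by (simp_all add: b_def frac_def algebra_simps)
  moreover have "b \<in> ZI"
    unfolding b_def by (metis Complex_of_int_in_ZI of_int_diff)
  ultimately show ?thesis
    using that[OF pq(1-3)] pq(4) assms(4,5)
    by (simp add: cell_def abs_diff_lt_if_floor_mult_eq)
qed

lemma ZI_approx_from_int_points:
  fixes X :: "(int \<times> int) set" and m\<^sub>1 m\<^sub>2 :: nat and D :: int
  assumes "finite X" "m\<^sub>1 * m\<^sub>2 < card X" "0 < m\<^sub>1" "0 < m\<^sub>2"
    and diam: "\<And>x y x' y'. (x, y) \<in> X \<Longrightarrow> (x', y') \<in> X \<Longrightarrow> (x - x')\<^sup>2 + (y - y')\<^sup>2 \<le> D"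
  obtains r b where "r \<in> ZI" "r \<noteq> 0" "(cmod r)\<^sup>2 \<le> D" "b \<in> ZI"
    "(cmod (r * \<beta> - b))\<^sup>2 \<le> (1 / m\<^sub>1)\<^sup>2 + (1 / m\<^sub>2)\<^sup>2"
proof -
  define G where "G = (\<lambda>(x, y). Complex (of_int x) (of_int y))"
  have "inj G"
    by (auto simp: G_def inj_on_def)
  then have "card (G ` X) = card X"
    by (simp add: card_image inj_on_subset)
  moreover have "G ` X \<subseteq> ZI"
    by (auto simp: G_def)
  moreover have "finite (G ` X)"
    using assms(1) by blast
  ultimately obtain p q b where pq: "p \<in> G ` X" "q \<in> G ` X" "p \<noteq> q" "b \<in> ZI"
    and approx: "\<bar>Re ((p - q) * \<beta> - b)\<bar> < 1 / m\<^sub>1" "\<bar>Im ((p - q) * \<beta> - b)\<bar> < 1 / m\<^sub>2"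
    using ZI_pigeonhole[of "G ` X" m\<^sub>1 m\<^sub>2] assms(2-4) by metis
  obtain x y x' y' where p: "p = G (x, y)" "(x, y) \<in> X" and q: "q = G (x', y')" "(x', y') \<in> X"
    using pq(1,2) by auto
  have "(cmod (p - q))\<^sup>2 = of_int ((x - x')\<^sup>2 + (y - y')\<^sup>2)"
    by (simp add: p q G_def cmod_power2)
  also have "\<dots> \<le> of_int D"
    using diam[OF p(2) q(2)] by (simp only: of_int_le_iff)
  finally have "(cmod (p - q))\<^sup>2 \<le> D" .
  moreover have "(cmod ((p - q) * \<beta> - b))\<^sup>2 \<le> (1 / m\<^sub>1)\<^sup>2 + (1 / m\<^sub>2)\<^sup>2"
    unfolding cmod_power2 using approx by (intro add_mono) (simp_all add: power2_le_iff_abs_le)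
  moreover have "p - q \<in> ZI"
    using pq \<open>G ` X \<subseteq> ZI\<close> by auto
  ultimately show ?thesis
    using that pq(3,4) by simp
qed

lemma gaussian_dirichlet_sq_square_box:
  fixes n :: nat and T :: real
  assumes "2 \<le> n" "2 * (real n)\<^sup>2 \<le> T" "T \<le> 2 * (real n)\<^sup>2 + 2"
  obtains r b where "r \<in> ZI" "r \<noteq> 0" "(cmod r)\<^sup>2 \<le> T" "b \<in> ZI" "(cmod (r * \<beta> - b))\<^sup>2 \<le> 4 / T"
proof -
  define X where "X = {0..int n} \<times> {0..int n}"
  have "card {0..int n} = n + 1"
    by simp
  then have card: "(n + 1) * n < card X"
    by (simp add: X_def card_cartesian_product)
  have diam: "(x - x')\<^sup>2 + (y - y')\<^sup>2 \<le> 2 * (int n)\<^sup>2" if "(x, y) \<in> X" "(x', y') \<in> X" for x y x' y'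
  proof -
    have "(x - x')\<^sup>2 \<le> (int n)\<^sup>2" "(y - y')\<^sup>2 \<le> (int n)\<^sup>2"
      using that unfolding X_def by (auto simp: power2_le_iff_abs_le)
    then show ?thesis
      by simp
  qed
  obtain r b where rb: "r \<in> ZI" "r \<noteq> 0" "(cmod r)\<^sup>2 \<le> of_int (2 * (int n)\<^sup>2)" "b \<in> ZI"
    "(cmod (r * \<beta> - b))\<^sup>2 \<le> (1 / real (n + 1))\<^sup>2 + (1 / real n)\<^sup>2"
    by (rule ZI_approx_from_int_points[OF _ card _ _ diam]) (use assms(1) in \<open>simp_all add: X_def\<close>)
  obtain m where "n = m + 2"
    using assms(1) by (metis add.commute le_Suc_ex)
  then have "(n\<^sup>2 + (n + 1)\<^sup>2) * (n\<^sup>2 + 1) \<le> 2 * n\<^sup>2 * (n + 1)\<^sup>2"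
    by (simp add: power2_eq_square algebra_simps)
  then have "real ((n\<^sup>2 + (n + 1)\<^sup>2) * (n\<^sup>2 + 1)) \<le> real (2 * n\<^sup>2 * (n + 1)\<^sup>2)"
    by (simp only: of_nat_le_iff)
  then have ineq: "((real n)\<^sup>2 + (real n + 1)\<^sup>2) * ((real n)\<^sup>2 + 1) \<le> 2 * ((real n)\<^sup>2 * (real n + 1)\<^sup>2)"
    by (simp add: algebra_simps)
  have "(1 / real (n + 1))\<^sup>2 + (1 / real n)\<^sup>2 = ((real n)\<^sup>2 + (real n + 1)\<^sup>2) / ((real n)\<^sup>2 * (real n + 1)\<^sup>2)"
    using assms(1) by (simp add: field_simps)
  also have "\<dots> \<le> 2 / ((real n)\<^sup>2 + 1)"
    using ineq assms(1) by (simp add: divide_simps add_pos_nonneg)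
  also have "\<dots> \<le> 4 / T"
  proof -
    have "0 < (real n)\<^sup>2"
      using assms(1) by simp
    then have "0 < T"
      using assms(2) by linarith
    then show ?thesis
      using assms(3) by (simp add: divide_simps)
  qed
  finally show ?thesis
    using that rb assms(2) by (simp add: add.commute)
qed

lemma gaussian_dirichlet_sq_notched_box:
  fixes n :: nat and T :: real
  assumes "2 \<le> n" "2 * (real n)\<^sup>2 + 2 \<le> T" "T \<le> 2 * (real n + 1)\<^sup>2"
  obtains r b where "r \<in> ZI" "r \<noteq> 0" "(cmod r)\<^sup>2 \<le> T" "b \<in> ZI" "(cmod (r * \<beta> - b))\<^sup>2 \<le> 4 / T"
proof -
  \<comment> \<open>Dropping two corners of the top row lowers the squared diameter from 2n^2 + 2n + 1
    to 2n^2 + 2 while leaving more than (n+1)^2 points.\<close>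
  define X where "X = {0..int n} \<times> {0..int n + 1} - {(int n, int n + 1), (0, int n + 1)}"
  have "card {0..int n} = n + 1" "card {0..int n + 1} = n + 2"
    by simp_all
  moreover have "card {(int n, int n + 1), (0, int n + 1)} = 2"
    using assms(1) by simp
  ultimately have "card X = (n + 1) * (n + 2) - 2"
    unfolding X_def by (subst card_Diff_subset) (auto simp: card_cartesian_product)
  then have card: "(n + 1) * (n + 1) < card X"
    using assms(1) by (simp add: algebra_simps)
  have diam: "(x - x')\<^sup>2 + (y - y')\<^sup>2 \<le> 2 * (int n)\<^sup>2 + 2" if "(x, y) \<in> X" "(x', y') \<in> X" for x y x' y'
  proof (cases "\<bar>y - y'\<bar> \<le> int n")
    case True
    then have "(x - x')\<^sup>2 \<le> (int n)\<^sup>2" "(y - y')\<^sup>2 \<le> (int n)\<^sup>2"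
      using that unfolding X_def by (auto simp: power2_le_iff_abs_le)
    then show ?thesis
      by simp
  next
    case False
    then have "{y, y'} = {0, int n + 1}"
      using that unfolding X_def by auto
    then have "(x - x')\<^sup>2 \<le> (int n - 1)\<^sup>2" "(y - y')\<^sup>2 \<le> (int n + 1)\<^sup>2"
      using that assms(1) unfolding X_def by (auto simp: power2_le_iff_abs_le doubleton_eq_iff)
    then show ?thesis
      by (simp add: power2_eq_square algebra_simps)
  qed
  obtain r b where rb: "r \<in> ZI" "r \<noteq> 0" "(cmod r)\<^sup>2 \<le> of_int (2 * (int n)\<^sup>2 + 2)" "b \<in> ZI"
    "(cmod (r * \<beta> - b))\<^sup>2 \<le> (1 / real (n + 1))\<^sup>2 + (1 / real (n + 1))\<^sup>2"
    by (rule ZI_approx_from_int_points[OF _ card _ _ diam]) (simp_all add: X_def)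
  have "0 < T"
    using assms(2) by (smt (verit) zero_le_power2)
  then have "(1 / real (n + 1))\<^sup>2 + (1 / real (n + 1))\<^sup>2 \<le> 4 / T"
    using assms(3) by (simp add: divide_simps add.commute)
  then show ?thesis
    using that rb assms(2) by simp
qed

text \<open>
  For T \<le> 8 the denominator 1 suffices. Otherwise n = \<lfloor>sqrt (T/2)\<rfloor> satisfies
  2n^2 \<le> T < 2(n+1)^2; the square box covers 2n^2 \<le> T \<le> 2n^2 + 2 and the notched box the rest.
\<close>
lemma gaussian_dirichlet_sq:
  fixes T :: real
  assumes "1 \<le> T"
  obtains r b where "r \<in> ZI" "r \<noteq> 0" "(cmod r)\<^sup>2 \<le> T" "b \<in> ZI" "(cmod (r * \<beta> - b))\<^sup>2 \<le> 4 / T"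
proof (cases "T \<le> 8")
  case True
  define b where "b = Complex (round (Re \<beta>)) (round (Im \<beta>))"
  have "\<bar>Re (\<beta> - b)\<bar> \<le> 1 / 2" "\<bar>Im (\<beta> - b)\<bar> \<le> 1 / 2"
    using of_int_round_abs_le by (simp_all add: b_def abs_minus_commute)
  then have "(cmod (1 * \<beta> - b))\<^sup>2 \<le> (1 / 2)\<^sup>2 + (1 / 2)\<^sup>2"
    unfolding cmod_power2 by (intro add_mono) (simp_all add: power2_le_iff_abs_le)
  also have "\<dots> \<le> 4 / T"
    using True assms by (simp add: divide_simps)
  finally have "(cmod (1 * \<beta> - b))\<^sup>2 \<le> 4 / T" .
  moreover have "b \<in> ZI"
    unfolding b_def by (rule Complex_of_int_in_ZI)
  ultimately show ?thesis
    using assms by (intro that[of 1 b]) simp_all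
next
  case False
  define n where "n = nat \<lfloor>sqrt (T / 2)\<rfloor>"
  have "2 \<le> sqrt (T / 2)"
    using False by (simp add: real_le_rsqrt)
  then have n: "2 \<le> n" "real n \<le> sqrt (T / 2)" "sqrt (T / 2) < real n + 1"
    unfolding n_def by linarith+
  have "(real n)\<^sup>2 \<le> (sqrt (T / 2))\<^sup>2" "(sqrt (T / 2))\<^sup>2 < (real n + 1)\<^sup>2"
    using n assms by (intro power_mono power_strict_mono; simp)+
  then have lo: "2 * (real n)\<^sup>2 \<le> T" and hi: "T \<le> 2 * (real n + 1)\<^sup>2"
    using assms by simp_all
  show ?thesis
  proof (cases "T \<le> 2 * (real n)\<^sup>2 + 2")
    case True
    then show ?thesis
      by (rule gaussian_dirichlet_sq_square_box[OF n(1) lo _ that])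
  next
    case False
    then have "2 * (real n)\<^sup>2 + 2 \<le> T"
      by linarith
    then show ?thesis
      by (rule gaussian_dirichlet_sq_notched_box[OF n(1) _ hi that])
  qed
qed

lemma gaussian_dirichlet:
  fixes \<tau> :: real
  assumes "1 \<le> \<tau>"
  obtains r b where "r \<in> ZI" "r \<noteq> 0" "cmod r \<le> \<tau>" "b \<in> ZI" "cmod (r * \<beta> - b) \<le> 2 / \<tau>"
proof -
  have "1 \<le> \<tau>\<^sup>2"
    using assms by simp
  then obtain r b where rb: "r \<in> ZI" "r \<noteq> 0" "(cmod r)\<^sup>2 \<le> \<tau>\<^sup>2" "b \<in> ZI"
    "(cmod (r * \<beta> - b))\<^sup>2 \<le> 4 / \<tau>\<^sup>2"
    by (rule gaussian_dirichlet_sq)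
  have "cmod r \<le> \<tau>"
    by (rule power2_le_imp_le[OF rb(3)]) (use assms in auto)
  have "(cmod (r * \<beta> - b))\<^sup>2 \<le> (2 / \<tau>)\<^sup>2"
    using rb(5) by (simp add: power_divide)
  then have "cmod (r * \<beta> - b) \<le> 2 / \<tau>"
    by (rule power2_le_imp_le) (use assms in auto)
  with \<open>cmod r \<le> \<tau>\<close> show ?thesis
    using that rb(1,2,4) by blast
qed

lemma smaller_approx_if_not_gcoprime:
  assumes "\<not> gcoprime b r" "r \<in> ZI" "r \<noteq> 0"
  obtains r' b' where "r' \<in> ZI" "r' \<noteq> 0" "cmod r' < cmod r" "b' \<in> ZI"
    "cmod (r' * \<beta> - b') \<le> cmod (r * \<beta> - b)"
proof -
  obtain d where d: "d \<in> ZI" "gdvd d b" "gdvd d r" "cmod d \<noteq> 1"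
    using assms(1) unfolding gcoprime_def by blast
  obtain r' where r': "r' \<in> ZI" "r = d * r'"
    using d(3) unfolding gdvd_def by blast
  obtain b' where b': "b' \<in> ZI" "b = d * b'"
    using d(2) unfolding gdvd_def by blast
  have "d \<noteq> 0" "r' \<noteq> 0"
    using r' assms(3) by auto
  then have "1 < cmod d"
    using norm_ge_1_if_ZI[OF d(1)] d(4) by fastforce
  have "cmod r' < cmod r"
    using \<open>1 < cmod d\<close> \<open>r' \<noteq> 0\<close> by (simp add: r'(2) norm_mult)
  moreover have "cmod (r * \<beta> - b) = cmod d * cmod (r' * \<beta> - b')"
    by (simp add: r'(2) b'(2) algebra_simps flip: norm_mult)
  then have "cmod (r' * \<beta> - b') \<le> cmod (r * \<beta> - b)"
    using \<open>1 < cmod d\<close> by (simp add: mult_le_cancel_right1)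
  ultimately show ?thesis
    using that r'(1) b'(1) \<open>r' \<noteq> 0\<close> by blast
qed

lemma gaussian_dirichlet_coprime:
  fixes \<tau> :: real
  assumes "1 \<le> \<tau>"
  obtains r b where "r \<in> ZI" "b \<in> ZI" "gcoprime b r" "1 \<le> cmod r" "cmod r \<le> \<tau>"
    "cmod (\<beta> - b / r) \<le> 2 / (cmod r * \<tau>)"
proof -
  define C where "C = {r \<in> ZI \<inter> cball 0 \<tau>. r \<noteq> 0 \<and> (\<exists>b\<in>ZI. cmod (r * \<beta> - b) \<le> 2 / \<tau>)}"
  have "finite C"
    unfolding C_def using finite_ZI_cball by (rule finite_subset[rotated]) blast
  moreover obtain r\<^sub>0 b\<^sub>0 where "r\<^sub>0 \<in> ZI" "r\<^sub>0 \<noteq> 0" "cmod r\<^sub>0 \<le> \<tau>" "b\<^sub>0 \<in> ZI"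
    "cmod (r\<^sub>0 * \<beta> - b\<^sub>0) \<le> 2 / \<tau>"
    by (rule gaussian_dirichlet[OF assms])
  then have "C \<noteq> {}"
    unfolding C_def by auto
  ultimately obtain r where "is_arg_min cmod (\<lambda>r. r \<in> C) r"
    using ex_is_arg_min_if_finite by blast
  then have "r \<in> C" and least: "\<And>r'. r' \<in> C \<Longrightarrow> cmod r \<le> cmod r'"
    by (auto simp: is_arg_min_linorder)
  then obtain b where r: "r \<in> ZI" "r \<noteq> 0" "cmod r \<le> \<tau>" and b: "b \<in> ZI" "cmod (r * \<beta> - b) \<le> 2 / \<tau>"
    unfolding C_def by auto
  have "gcoprime b r"
  proof (rule ccontr)
    assume "\<not> gcoprime b r"
    then obtain r' b' where "r' \<in> ZI" "r' \<noteq> 0" "cmod r' < cmod r" "b' \<in> ZI"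
      "cmod (r' * \<beta> - b') \<le> cmod (r * \<beta> - b)"
      using r(1,2) by (rule smaller_approx_if_not_gcoprime)
    then have "r' \<in> C"
      unfolding C_def using r(3) b(2) by (auto intro: order_trans)
    with least \<open>cmod r' < cmod r\<close> show False
      by fastforce
  qed
  moreover have "1 \<le> cmod r"
    using norm_ge_1_if_ZI r by blast
  moreover have "\<beta> - b / r = (r * \<beta> - b) / r"
    using r(2) by (simp add: field_simps)
  then have "cmod (\<beta> - b / r) \<le> 2 / (cmod r * \<tau>)"
    using b(2) r(2) by (simp add: norm_divide divide_right_mono field_simps)
  ultimately show ?thesis
    using that r(1,3) b(1) by blast
qed

lemma sum_sq_le_two_mult_abs_coord:
  fixes x y d s :: real
  assumes "0 \<le> d" "d < s" "(x - d)\<^sup>2 + y\<^sup>2 \<le> s\<^sup>2"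
  shows "x\<^sup>2 + y\<^sup>2 \<le> 2 * s * \<bar>x\<bar> \<or> x\<^sup>2 + y\<^sup>2 \<le> 2 * s * \<bar>y\<bar>"
proof (rule ccontr)
  define \<rho> where "\<rho> = x\<^sup>2 + y\<^sup>2"
  assume "\<not> ?thesis"
  then have gt: "2 * s * \<bar>x\<bar> < \<rho>" "2 * s * \<bar>y\<bar> < \<rho>"
    unfolding \<rho>_def by auto
  have "(2 * s * \<bar>x\<bar>)\<^sup>2 < \<rho>\<^sup>2" "(2 * s * \<bar>y\<bar>)\<^sup>2 < \<rho>\<^sup>2"
    using gt assms(1,2) by (intro power_strict_mono; simp)+
  then have "2 * s\<^sup>2 * \<rho> < \<rho> * \<rho>"
    unfolding \<rho>_def by (simp add: power_mult_distrib power2_eq_square algebra_simps)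
  then have big: "2 * s\<^sup>2 < \<rho>"
    using gt(1) assms(1,2) by (smt (verit) mult_less_cancel_right mult_nonneg_nonneg)
  have disc: "\<rho> \<le> 2 * d * x + s\<^sup>2 - d\<^sup>2"
    using assms(3) unfolding \<rho>_def by (simp add: power2_diff algebra_simps)
  show False
  proof (cases "x \<le> 0")
    case True
    then have "d * x \<le> 0"
      using assms(1) by (simp add: mult_nonneg_nonpos)
    then show False
      using disc big zero_le_power2[of d] zero_le_power2[of s] by linarith
  next
    case False
    then have "2 * x * (s - d) < (s + d) * (s - d)"
      using disc gt(1) by (simp add: power2_eq_square algebra_simps)
    then have "2 * x < s + d"
      using assms(2) by simp
    then have "d * (2 * x) \<le> d * (s + d)"
      using assms(1) by (intro mult_left_mono) auto
    moreover have "d * s \<le> s\<^sup>2"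
      using assms(1,2) by (simp add: power2_eq_square mult_right_mono)
    ultimately show False
      using disc big by (simp add: power2_eq_square algebra_simps)
  qed
qed

lemma norm_le_iff_sum_sq: "0 \<le> s \<Longrightarrow> cmod z \<le> s \<longleftrightarrow> (Re z)\<^sup>2 + (Im z)\<^sup>2 \<le> s\<^sup>2"
  by (metis abs_le_square_iff abs_of_nonneg cmod_power2 norm_ge_zero)

lemma cball_real_center_covered:
  assumes "0 \<le> d" "d < s" "cmod (w - of_real d) \<le> s"
  shows "\<exists>k<4. cmod (w - of_real s * \<i> ^ k) \<le> s"
proof -
  define \<rho> where "\<rho> = (Re w)\<^sup>2 + (Im w)\<^sup>2"
  have s: "0 \<le> s"
    using assms by linarith
  have "(Re w - d)\<^sup>2 + (Im w)\<^sup>2 \<le> s\<^sup>2"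
    using assms(3) s by (simp add: norm_le_iff_sum_sq)
  then have "\<rho> \<le> 2 * s * \<bar>Re w\<bar> \<or> \<rho> \<le> 2 * s * \<bar>Im w\<bar>"
    unfolding \<rho>_def using sum_sq_le_two_mult_abs_coord assms(1,2) by blast
  moreover have "cmod (w - of_real s * \<i> ^ 0) \<le> s \<longleftrightarrow> \<rho> \<le> 2 * s * Re w"
    using s unfolding \<rho>_def by (simp add: norm_le_iff_sum_sq power2_diff algebra_simps)
  moreover have "cmod (w - of_real s * \<i> ^ 1) \<le> s \<longleftrightarrow> \<rho> \<le> 2 * s * Im w"
    using s unfolding \<rho>_def by (simp add: norm_le_iff_sum_sq power2_diff algebra_simps)
  moreover have "cmod (w - of_real s * \<i> ^ 2) \<le> s \<longleftrightarrow> \<rho> \<le> - 2 * s * Re w"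
    using s unfolding \<rho>_def
    by (simp add: norm_le_iff_sum_sq power2_eq_square algebra_simps) linarith
  moreover have "cmod (w - of_real s * \<i> ^ 3) \<le> s \<longleftrightarrow> \<rho> \<le> - 2 * s * Im w"
    using s unfolding \<rho>_def
    by (simp add: norm_le_iff_sum_sq power2_eq_square power3_eq_cube algebra_simps) linarith
  moreover have "(0::nat) < 4" "(1::nat) < 4" "(2::nat) < 4" "(3::nat) < 4"
    by simp_all
  ultimately show ?thesis
    by (metis abs_if mult_minus_right mult_minus_left)
qed

lemma cball_covered_by_four_cballs:
  fixes v :: complex
  assumes "cmod v < s"
  obtains u where "cmod u = 1" "cball v s \<subseteq> (\<Union>k<4. cball (of_real s * u * \<i> ^ k) s)"
proof
  define u where "u = (if v = 0 then 1 else sgn v)"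
  show u: "cmod u = 1"
    by (simp add: u_def norm_sgn)
  have "u * cnj u = 1"
    using u by (simp add: complex_norm_square[symmetric])
  have v: "v = of_real (cmod v) * u"
    by (simp add: u_def sgn_div_norm scaleR_conv_of_real)
  show "cball v s \<subseteq> (\<Union>k<4. cball (of_real s * u * \<i> ^ k) s)"
  proof
    fix w assume "w \<in> cball v s"
    \<comment> \<open>Multiplying by cnj u rotates v onto the nonnegative real axis.\<close>
    then have "cmod ((w - v) * cnj u) \<le> s"
      by (simp add: dist_norm norm_mult u norm_minus_commute)
    moreover have "(w - v) * cnj u = w * cnj u - of_real (cmod v) * (u * cnj u)"
      by (subst v) (simp add: algebra_simps)
    ultimately have "cmod (w * cnj u - of_real (cmod v)) \<le> s"
      by (simp add: \<open>u * cnj u = 1\<close>)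
    then obtain k where "k < 4" "cmod (w * cnj u - of_real s * \<i> ^ k) \<le> s"
      using cball_real_center_covered assms by (meson norm_ge_zero)
    moreover have "w * cnj u - of_real s * \<i> ^ k = (w - of_real s * u * \<i> ^ k) * cnj u"
      by (simp add: algebra_simps \<open>u * cnj u = 1\<close>)
    ultimately show "w \<in> (\<Union>k<4. cball (of_real s * u * \<i> ^ k) s)"
      by (auto simp: dist_norm norm_mult u norm_minus_commute)
  qed
qed

definition approx_pairs :: "complex set \<Rightarrow> real \<Rightarrow> complex \<Rightarrow> (complex \<times> complex) set" where
  "approx_pairs S \<Delta> \<alpha> = {(a, q). a \<in> ZI \<and> q \<in> S \<and> gcoprime a q \<and> cmod (a / q - \<alpha>) \<le> sqrt \<Delta>}"

lemma Pfun_eq_card_approx_pairs: "Pfun S \<Delta> \<alpha> = card (approx_pairs S \<Delta> \<alpha>)"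
  unfolding Pfun_def approx_pairs_def ..

lemma approx_pairs_subset_UN:
  assumes "S \<subseteq> cball 0 M \<inter> (ZI - {0})"
  shows "approx_pairs S \<Delta> \<alpha> \<subseteq> (\<Union>q\<in>S. (ZI \<inter> cball (q * \<alpha>) (M * sqrt \<Delta>)) \<times> {q})"
proof
  fix p assume "p \<in> approx_pairs S \<Delta> \<alpha>"
  then obtain a q where p: "p = (a, q)" and a: "a \<in> ZI" "cmod (a / q - \<alpha>) \<le> sqrt \<Delta>"
    and q: "q \<in> S"
    unfolding approx_pairs_def by auto
  have "q \<noteq> 0" "cmod q \<le> M"
    using q assms by auto
  then have "a - q * \<alpha> = q * (a / q - \<alpha>)"
    by (simp add: field_simps)
  then have "dist (q * \<alpha>) a = cmod q * cmod (a / q - \<alpha>)"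
    by (metis dist_commute dist_norm norm_mult)
  also have "\<dots> \<le> M * sqrt \<Delta>"
    using \<open>cmod q \<le> M\<close> a(2) by (simp add: mult_mono')
  finally show "p \<in> (\<Union>q\<in>S. (ZI \<inter> cball (q * \<alpha>) (M * sqrt \<Delta>)) \<times> {q})"
    using a(1) p q by auto
qed

lemma
  assumes "S \<subseteq> cball 0 M \<inter> (ZI - {0})"
  shows finite_approx_pairs: "finite (approx_pairs S \<Delta> \<alpha>)"
    and card_approx_pairs_le:
      "card (approx_pairs S \<Delta> \<alpha>) \<le> card S * card (ZI \<inter> cball 0 (2 * (M * sqrt \<Delta>)))"
proof -
  have "finite S"
    using assms finite_subset[OF _ finite_ZI_cball[of 0 M]] by blast
  let ?U = "\<Union>q\<in>S. (ZI \<inter> cball (q * \<alpha>) (M * sqrt \<Delta>)) \<times> {q}"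
  have "finite ?U"
    using \<open>finite S\<close> finite_ZI_cball by blast
  then show "finite (approx_pairs S \<Delta> \<alpha>)"
    using approx_pairs_subset_UN[OF assms] by (rule finite_subset[rotated])
  have "card (approx_pairs S \<Delta> \<alpha>) \<le> card ?U"
    using approx_pairs_subset_UN[OF assms] \<open>finite ?U\<close> by (rule card_mono[rotated])
  also have "\<dots> \<le> (\<Sum>q\<in>S. card ((ZI \<inter> cball (q * \<alpha>) (M * sqrt \<Delta>)) \<times> {q}))"
    by (rule card_UN_le[OF \<open>finite S\<close>])
  also have "\<dots> \<le> (\<Sum>q\<in>S. card (ZI \<inter> cball 0 (2 * (M * sqrt \<Delta>))))"
    by (intro sum_mono) (simp add: card_cartesian_product card_ZI_cball_le)
  finally show "card (approx_pairs S \<Delta> \<alpha>) \<le> card S * card (ZI \<inter> cball 0 (2 * (M * sqrt \<Delta>)))"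
    by simp
qed

lemma Pfun_le_sum_four_shifts:
  assumes "S \<subseteq> cball 0 M \<inter> (ZI - {0})" "cmod v < sqrt \<Delta>"
  obtains u where "cmod u = 1"
    "Pfun S \<Delta> (c + v) \<le> (\<Sum>k<4. Pfun S \<Delta> (c + of_real (sqrt \<Delta>) * u * \<i> ^ k))"
proof -
  obtain u where u: "cmod u = 1"
    and cover: "cball v (sqrt \<Delta>) \<subseteq> (\<Union>k<4. cball (of_real (sqrt \<Delta>) * u * \<i> ^ k) (sqrt \<Delta>))"
    using cball_covered_by_four_cballs[OF assms(2)] by blast
  have "\<exists>k<4. p \<in> approx_pairs S \<Delta> (c + of_real (sqrt \<Delta>) * u * \<i> ^ k)"
    if "p \<in> approx_pairs S \<Delta> (c + v)" for p
  proof -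
    have shift: "dist z (a / q - c) = cmod (a / q - (c + z))" for z a q
      by (simp add: dist_norm algebra_simps) (rule norm_minus_commute)
    obtain a q where p: "p = (a, q)"
      by fastforce
    with that have pair: "a \<in> ZI" "q \<in> S" "gcoprime a q" "cmod (a / q - (c + v)) \<le> sqrt \<Delta>"
      unfolding approx_pairs_def by auto
    then have "a / q - c \<in> cball v (sqrt \<Delta>)"
      by (simp add: shift)
    then obtain k where "k < 4" "a / q - c \<in> cball (of_real (sqrt \<Delta>) * u * \<i> ^ k) (sqrt \<Delta>)"
      using cover by blast
    then show ?thesis
      using p pair by (auto simp: approx_pairs_def shift)
  qed
  then have "approx_pairs S \<Delta> (c + v) \<subseteq> (\<Union>k<4. approx_pairs S \<Delta> (c + of_real (sqrt \<Delta>) * u * \<i> ^ k))"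
    by blast
  then have "card (approx_pairs S \<Delta> (c + v))
      \<le> card (\<Union>k<4. approx_pairs S \<Delta> (c + of_real (sqrt \<Delta>) * u * \<i> ^ k))"
    by (intro card_mono) (auto intro: finite_approx_pairs[OF assms(1)])
  also have "\<dots> \<le> (\<Sum>k<4. card (approx_pairs S \<Delta> (c + of_real (sqrt \<Delta>) * u * \<i> ^ k)))"
    by (rule card_UN_le) simp
  finally show ?thesis
    using that u by (simp add: Pfun_eq_card_approx_pairs)
qed

lemma reduced_residue_system_unique:
  assumes "reduced_residue_system q R" "a \<in> R" "a' \<in> R" "gdvd q (a - a')"
  shows "a = a'"
proof -
  have "a \<in> ZI" "gcoprime a q"
    using assms(1,2) unfolding reduced_residue_system_def by auto
  then have "\<exists>!r. r \<in> R \<and> gdvd q (a - r)"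
    using assms(1) unfolding reduced_residue_system_def by blast
  moreover have "gdvd q (a - a)"
    unfolding gdvd_def by (auto intro: bexI[of _ 0])
  ultimately show ?thesis
    using assms(2-4) by blast
qed

lemma card_conj_approx_le_Pfun:
  assumes S: "S \<subseteq> cball 0 M \<inter> (ZI - {0})"
    and R: "\<And>q. q \<in> S \<Longrightarrow> reduced_residue_system q (R q)"
  shows "card {(a, q). q \<in> S \<and> a \<in> R q \<and> (\<exists>w\<in>ZI. cmod (cnj a / cnj q - \<alpha> - w) \<le> sqrt \<Delta>)}
    \<le> Pfun S \<Delta> (cnj \<alpha>)"
    (is "card ?K \<le> _")
proof -
  have ex: "\<forall>p\<in>?K. \<exists>w. w \<in> ZI \<and> cmod (cnj (fst p) / cnj (snd p) - \<alpha> - w) \<le> sqrt \<Delta>"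
    by auto
  obtain W where "\<forall>p\<in>?K. W p \<in> ZI \<and> cmod (cnj (fst p) / cnj (snd p) - \<alpha> - W p) \<le> sqrt \<Delta>"
    using bchoice[OF ex] by blast
  then have W: "\<And>p. p \<in> ?K \<Longrightarrow> W p \<in> ZI"
    "\<And>p. p \<in> ?K \<Longrightarrow> cmod (cnj (fst p) / cnj (snd p) - \<alpha> - W p) \<le> sqrt \<Delta>"
    by blast+
  define h where "h p = (fst p - snd p * cnj (W p), snd p)" for p
  have "h ` ?K \<subseteq> approx_pairs S \<Delta> (cnj \<alpha>)"
  proof (rule image_subsetI)
    fix p assume "p \<in> ?K"
    moreover obtain a q where p: "p = (a, q)"
      by fastforce
    ultimately have aq: "(a, q) \<in> ?K"
      by simp
    then have q: "q \<in> S" "q \<noteq> 0" and "a \<in> R q"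
      using S by auto
    then have "a \<in> ZI" "gcoprime a q"
      using R unfolding reduced_residue_system_def by blast+
    have "cnj (W (a, q)) \<in> ZI"
      using W(1)[OF aq] by auto
    moreover have "cnj ((a - q * cnj (W (a, q))) / q - cnj \<alpha>) = cnj a / cnj q - \<alpha> - W (a, q)"
      using q(2) by (simp add: field_simps)
    then have "cmod ((a - q * cnj (W (a, q))) / q - cnj \<alpha>) \<le> sqrt \<Delta>"
      using W(2)[OF aq] by (metis complex_mod_cnj fst_conv snd_conv)
    moreover have "a - q * cnj (W (a, q)) \<in> ZI"
      using q(1) S \<open>a \<in> ZI\<close> \<open>cnj (W (a, q)) \<in> ZI\<close> by blast
    ultimately show "h p \<in> approx_pairs S \<Delta> (cnj \<alpha>)"
      using p q(1) gcoprime_diff_mult[OF \<open>gcoprime a q\<close>] by (simp add: h_def approx_pairs_def)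
  qed
  moreover have "inj_on h ?K"
  proof (rule inj_onI)
    fix p p' assume p: "p \<in> ?K" and p': "p' \<in> ?K" and "h p = h p'"
    then have q: "snd p' = snd p" and "fst p - fst p' = snd p * (cnj (W p) - cnj (W p'))"
      by (auto simp: h_def algebra_simps)
    moreover have "cnj (W p) - cnj (W p') \<in> ZI"
      using W(1)[OF p] W(1)[OF p'] by blast
    ultimately have "gdvd (snd p) (fst p - fst p')"
      unfolding gdvd_def by blast
    moreover have "snd p \<in> S" "fst p \<in> R (snd p)" "fst p' \<in> R (snd p)"
      using p p' q by auto
    ultimately have "fst p = fst p'"
      using R reduced_residue_system_unique by blast
    then show "p = p'"
      using q by (simp add: prod_eq_iff)
  qed
  ultimately show ?thesis
    unfolding Pfun_eq_card_approx_pairs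
    by (intro card_inj_on_le finite_approx_pairs[OF S])
qed

lemma cSUP3_upper:
  fixes f :: "'a \<Rightarrow> 'b \<Rightarrow> 'c \<Rightarrow> real"
  assumes ne: "\<And>x. x \<in> A \<Longrightarrow> B x \<noteq> {}" "\<And>x y. x \<in> A \<Longrightarrow> y \<in> B x \<Longrightarrow> C x y \<noteq> {}"
    and bound: "\<And>x y z. x \<in> A \<Longrightarrow> y \<in> B x \<Longrightarrow> z \<in> C x y \<Longrightarrow> f x y z \<le> M"
    and ijk: "i \<in> A" "j \<in> B i" "k \<in> C i j"
  shows "f i j k \<le> (SUP x\<in>A. SUP y\<in>B x. SUP z\<in>C x y. f x y z)"
proof -
  have inner: "(SUP z\<in>C x y. f x y z) \<le> M" if "x \<in> A" "y \<in> B x" for x y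
    using ne(2)[OF that] bound[OF that] by (rule cSUP_least) auto
  have middle: "(SUP y\<in>B x. SUP z\<in>C x y. f x y z) \<le> M" if "x \<in> A" for x
    using ne(1)[OF that] inner[OF that] by (rule cSUP_least) auto
  have "f i j k \<le> (SUP z\<in>C i j. f i j z)"
    using bound ijk by (intro cSUP_upper bdd_aboveI2) auto
  also have "\<dots> \<le> (SUP y\<in>B i. SUP z\<in>C i y. f i y z)"
    using inner ijk by (intro cSUP_upper bdd_aboveI2) auto
  also have "\<dots> \<le> (SUP x\<in>A. SUP y\<in>B x. SUP z\<in>C x y. f x y z)"
    using middle ijk by (intro cSUP_upper bdd_aboveI2) auto
  finally show ?thesis .
qed

definition Psup :: "complex set \<Rightarrow> real \<Rightarrow> real \<Rightarrow> real" where
  "Psup S \<Delta> \<tau> =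
    (SUP r\<in>{r\<in>ZI. 1 \<le> cmod r \<and> cmod r \<le> \<tau>}.
      SUP b\<in>{b\<in>ZI. gcoprime b r}.
        SUP z\<in>{z. sqrt \<Delta> \<le> cmod z \<and> cmod z \<le> 2 / (cmod r * \<tau>)}.
          real (Pfun S \<Delta> (b / r + z)))"

lemma sqrt_le_two_div_if_le:
  fixes s \<rho> \<tau> :: real
  assumes "0 \<le> s" "0 < \<rho>" "\<rho> \<le> \<tau>" "s * \<tau>\<^sup>2 \<le> 2"
  shows "s \<le> 2 / (\<rho> * \<tau>)"
proof -
  have "\<rho> * \<tau> * s \<le> \<tau> * \<tau> * s"
    using assms(1-3) by (intro mult_right_mono) auto
  then have "\<rho> * \<tau> * s \<le> 2"
    using assms(4) by (simp add: power2_eq_square algebra_simps)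
  moreover have "0 < \<rho> * \<tau>"
    using assms(2,3) by simp
  ultimately show ?thesis
    by (simp add: field_simps)
qed

lemma Pfun_shift_le_Psup:
  assumes S: "S \<subseteq> cball 0 M \<inter> (ZI - {0})" and "0 < \<Delta>" "sqrt \<Delta> * \<tau>\<^sup>2 \<le> 2"
    and r: "r \<in> ZI" "1 \<le> cmod r" "cmod r \<le> \<tau>" and b: "b \<in> ZI" "gcoprime b r"
    and z: "sqrt \<Delta> \<le> cmod z" "cmod z \<le> 2 / (cmod r * \<tau>)"
  shows "real (Pfun S \<Delta> (b / r + z)) \<le> Psup S \<Delta> \<tau>"
  unfolding Psup_def
proof (rule cSUP3_upper[where C = "\<lambda>r _. {z. sqrt \<Delta> \<le> cmod z \<and> cmod z \<le> 2 / (cmod r * \<tau>)}"])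
  show "{b \<in> ZI. gcoprime b r} \<noteq> {}" for r
    using gcoprime_1_left ZI_1 by blast
  show "{z. sqrt \<Delta> \<le> cmod z \<and> cmod z \<le> 2 / (cmod r * \<tau>)} \<noteq> {}"
    if "r \<in> {r \<in> ZI. 1 \<le> cmod r \<and> cmod r \<le> \<tau>}" for r
  proof -
    have "cmod (of_real (sqrt \<Delta>)) = sqrt \<Delta>"
      using assms(2) by simp
    moreover have "sqrt \<Delta> \<le> 2 / (cmod r * \<tau>)"
      using that assms(2,3) by (intro sqrt_le_two_div_if_le) auto
    ultimately show ?thesis
      by (metis (mono_tags, lifting) empty_iff mem_Collect_eq order_refl)
  qed
  show "real (Pfun S \<Delta> (b / r + z)) \<le> card S * card (ZI \<inter> cball 0 (2 * (M * sqrt \<Delta>)))"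
    for r b z
    using card_approx_pairs_le[OF S] by (simp add: Pfun_eq_card_approx_pairs flip: of_nat_mult)
qed (use r b z in auto)

lemma Pfun_le_four_Psup:
  assumes S: "S \<subseteq> cball 0 M \<inter> (ZI - {0})" and "0 < \<Delta>" "1 \<le> \<tau>" "sqrt \<Delta> * \<tau>\<^sup>2 \<le> 2"
  shows "real (Pfun S \<Delta> \<beta>) \<le> 4 * Psup S \<Delta> \<tau>"
proof -
  obtain r b where r: "r \<in> ZI" "1 \<le> cmod r" "cmod r \<le> \<tau>" and b: "b \<in> ZI" "gcoprime b r"
    and approx: "cmod (\<beta> - b / r) \<le> 2 / (cmod r * \<tau>)"
    using gaussian_dirichlet_coprime[OF assms(3)] by metis
  note shift_le = Pfun_shift_le_Psup[OF S assms(2,4) r b]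
  show ?thesis
  proof (cases "sqrt \<Delta> \<le> cmod (\<beta> - b / r)")
    case True
    then have "real (Pfun S \<Delta> \<beta>) \<le> Psup S \<Delta> \<tau>"
      using shift_le[OF _ approx] by simp
    then show ?thesis
      using of_nat_0_le_iff[of "Pfun S \<Delta> \<beta>"] by linarith
  next
    case False
    then obtain u where u: "cmod u = 1" and "Pfun S \<Delta> (b / r + (\<beta> - b / r))
        \<le> (\<Sum>k<4. Pfun S \<Delta> (b / r + of_real (sqrt \<Delta>) * u * \<i> ^ k))"
      using Pfun_le_sum_four_shifts[OF S] by (metis not_le)
    then have "real (Pfun S \<Delta> \<beta>) \<le> (\<Sum>k<4. real (Pfun S \<Delta> (b / r + of_real (sqrt \<Delta>) * u * \<i> ^ k)))"
      by (simp flip: of_nat_sum)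
    also have "\<dots> \<le> (\<Sum>k<(4::nat). Psup S \<Delta> \<tau>)"
    proof (intro sum_mono shift_le)
      fix k :: nat
      have on_circle: "cmod (of_real (sqrt \<Delta>) * u * \<i> ^ k) = sqrt \<Delta>"
        using u assms(2) by (simp add: norm_mult norm_power)
      then show "sqrt \<Delta> \<le> cmod (of_real (sqrt \<Delta>) * u * \<i> ^ k)"
        by simp
      show "cmod (of_real (sqrt \<Delta>) * u * \<i> ^ k) \<le> 2 / (cmod r * \<tau>)"
        unfolding on_circle using r assms(2,4) by (intro sqrt_le_two_div_if_le) auto
    qed
    finally show ?thesis
      by simp
  qed
qed

theorem lemma1:
  fixes Q :: nat and S :: "complex set" and R :: "complex \<Rightarrow> complex set"
    and \<Delta> \<tau> :: real
  assumes "S \<subseteq> cball 0 (sqrt (real Q)) \<inter> (ZI - {0})"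
    and "0 < \<Delta>" and "\<Delta> \<le> 1/2"
    and "\<tau> = \<Delta> powr (-1/4)"
    and "\<And>q. q \<in> S \<Longrightarrow> reduced_residue_system q (R q)"
  shows "Kfun S R \<Delta> \<le> 4 *
    (SUP r\<in>{r\<in>ZI. 1 \<le> cmod r \<and> cmod r \<le> \<tau>}.
      SUP b\<in>{b\<in>ZI. gcoprime b r}.
        SUP z\<in>{z. sqrt \<Delta> \<le> cmod z \<and> cmod z \<le> 2 / (cmod r * \<tau>)}.
          real (Pfun S \<Delta> (b / r + z)))"
proof -
  have "sqrt \<Delta> * \<tau>\<^sup>2 = \<Delta> powr (1/2) * \<Delta> powr (2 * (-1/4))"
    using assms(2,4) by (simp add: powr_half_sqrt powr_power)
  also have "\<dots> = 1"
    using assms(2) by (simp flip: powr_add)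
  finally have "sqrt \<Delta> * \<tau>\<^sup>2 \<le> 2"
    by simp
  moreover have "1 \<le> \<tau>"
    using powr_mono2'[of "-1/4" \<Delta> 1] assms(2-4) by simp
  ultimately have "Kfun S R \<Delta> \<le> 4 * Psup S \<Delta> \<tau>"
    unfolding Kfun_def
    using order_trans[OF of_nat_mono[OF card_conj_approx_le_Pfun[OF assms(1,5)]]
        Pfun_le_four_Psup[OF assms(1,2)]]
    by (intro cSUP_least) auto
  then show ?thesis
    unfolding Psup_def .
qed

end
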